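(* Let $f(z)=\prod_{j=1}^\infty(1+z/b_j)$, $z\in\mathbb{C}$, where $(b_j)_{j\ge1}$ is an increasing sequence of positive numbers with $\sum_{j\ge1}1/b_j<+\infty$, and assume $f$ has order $\rho\in(0,1)$. Let $F(s)=\ln f(e^s)=\sum_{j\ge1}\ln(1+e^s/b_j)$, $s\in\mathbb{R}$. Then $$\liminf_{s\to+\infty}\frac{|F^{(k)}(s)|}{F''(s)^{k/2}}=0\quad\text{for every integer }k\ge3.$$
   Context: The order of an entire function $f$ is $\limsup_{r\to\infty}\frac{\ln\ln\max_{|z|=r}|f(z)|}{\ln r}$. $F^{(k)}$ denotes the $k$-th derivative. *)

theory Defs
  imports "HOL-Analysis.Analysis"
begin

definition max_modulus :: "(complex \<Rightarrow> complex) \<Rightarrow> real \<Rightarrow> real" where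
  "max_modulus f r = Sup ((\<lambda>z. norm (f z)) ` sphere 0 r)"

definition entire_order :: "(complex \<Rightarrow> complex) \<Rightarrow> ereal" where
  "entire_order f = Limsup at_top (\<lambda>r::real. ereal (ln (ln (max_modulus f r)) / ln r))"

end

theory Submission
  imports Defs "HOL-Computational_Algebra.Polynomial" "HOL-Real_Asymp.Real_Asymp"
begin

text \<open>Put \<open>\<sigma>\<^sub>j(s) = e\<^sup>s / (b\<^sub>j + e\<^sup>s)\<close>. For \<open>k \<ge> 1\<close> the \<open>k\<close>-th derivative of
  \<open>ln (1 + e\<^sup>s / b\<^sub>j)\<close> is \<open>P(\<sigma>\<^sub>j)\<close> for a polynomial \<open>P\<close> depending only on \<open>k\<close>, and for
  \<open>k \<ge> 2\<close> it is divisible by \<open>X (1 - X)\<close>, while the second derivative is exactly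
  \<open>\<sigma>\<^sub>j (1 - \<sigma>\<^sub>j)\<close>. Summing over \<open>j\<close> gives \<open>|F\<^sup>(\<^sup>k\<^sup>)| \<le> C F''\<close>. Moreover \<open>F''\<close> is unbounded:
  otherwise \<open>F(s) = O(s\<^sup>2)\<close>, hence \<open>ln M(r) \<le> F(ln r) = O((ln r)\<^sup>2)\<close> and \<open>f\<close> would have
  order \<open>0\<close>. Where \<open>F''\<close> is large, the ratio is at most \<open>C F'' / F''\<^sup>k\<^sup>/\<^sup>2\<close>, which is small
  because \<open>k > 2\<close>.\<close>

lemma Liminf_le_if_frequently_le:
  fixes X :: "'a \<Rightarrow> 'b::complete_linorder"
  assumes "\<exists>\<^sub>F x in F. X x \<le> C"
  shows "Liminf F X \<le> C"
proof (rule Liminf_least)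
  fix P
  assume "eventually P F"
  then obtain x where "P x" "X x \<le> C"
    using frequently_eventually_frequently[OF assms] frequently_ex by blast
  then show "(INF x\<in>Collect P. X x) \<le> C"
    by (auto intro: INF_lower2)
qed

lemma Liminf_abs_div_powr_eq_0:
  fixes g h :: "'a \<Rightarrow> real"
  assumes h_le: "\<And>x. \<bar>h x\<bar> \<le> C * g x" and p: "1 < p"
    and g_unbounded: "\<And>L. \<exists>\<^sub>F x in F. L \<le> g x"
  shows "Liminf F (\<lambda>x. ereal (\<bar>h x\<bar> / g x powr p)) = 0"
proof (rule antisym)
  show "Liminf F (\<lambda>x. ereal (\<bar>h x\<bar> / g x powr p)) \<le> 0"
  proof (rule ereal_le_epsilon2)
    fix e :: real
    assume "0 < e"
    have "((\<lambda>y. C * y powr (1 - p)) \<longlongrightarrow> 0) at_top"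
      using p by (intro tendsto_mult_right_zero tendsto_neg_powr filterlim_ident) auto
    then have "\<forall>\<^sub>F y in at_top. C * y powr (1 - p) < e"
      using \<open>0 < e\<close> by (rule order_tendstoD)
    then obtain L where L: "\<And>y. L \<le> y \<Longrightarrow> C * y powr (1 - p) < e"
      by (auto simp: eventually_at_top_linorder)
    have "\<bar>h x\<bar> / g x powr p \<le> e" if "max L 1 \<le> g x" for x
    proof -
      have "\<bar>h x\<bar> / g x powr p \<le> C * g x / g x powr p"
        using h_le by (intro divide_right_mono) auto
      also have "\<dots> = C * g x powr (1 - p)"
        using that by (simp add: powr_diff)
      also have "\<dots> < e"
        using L that by auto
      finally show ?thesis
        by simp
    qed
    then have "\<exists>\<^sub>F x in F. ereal (\<bar>h x\<bar> / g x powr p) \<le> 0 + ereal e"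
      using g_unbounded[of "max L 1"] by (auto elim!: frequently_elim1)
    then show "Liminf F (\<lambda>x. ereal (\<bar>h x\<bar> / g x powr p)) \<le> 0 + ereal e"
      by (rule Liminf_le_if_frequently_le)
  qed
  show "0 \<le> Liminf F (\<lambda>x. ereal (\<bar>h x\<bar> / g x powr p))"
    by (intro Liminf_bounded always_eventually allI) simp
qed

lemma MVT_affine_upper_bound:
  fixes g :: "real \<Rightarrow> real"
  assumes g: "\<And>s. (g has_real_derivative g' s) (at s)"
    and g'_le: "\<And>s. a \<le> s \<Longrightarrow> g' s \<le> A + B * (s - a)" and B: "0 \<le> B"
    and s: "a \<le> s"
  shows "g s \<le> g a + (s - a) * (A + B * (s - a))"
proof (cases "a = s")
  case False
  with s obtain z where z: "a < z" "z < s" "g s - g a = (s - a) * g' z"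
    using MVT2[OF _ g] by (metis order_le_imp_less_or_eq)
  have "g' z \<le> A + B * (s - a)"
    using g'_le[of z] z B mult_left_mono[of "z - a" "s - a" B] by auto
  then have "(s - a) * g' z \<le> (s - a) * (A + B * (s - a))"
    using s by (intro mult_left_mono) auto
  then show ?thesis
    using z by (simp add: algebra_simps)
qed simp

lemma quadratic_bound_if_second_deriv_le:
  fixes g :: "real \<Rightarrow> real"
  assumes g: "\<And>s. (g has_real_derivative g' s) (at s)"
    and g': "\<And>s. (g' has_real_derivative g'' s) (at s)"
    and g''_le: "\<And>s. a \<le> s \<Longrightarrow> g'' s \<le> L"
  shows "\<exists>K>0. \<forall>\<^sub>F s in at_top. g s \<le> K * s\<^sup>2"
proof -
  define L' where "L' = max L 0"
  have L': "0 \<le> L'" "\<And>s. a \<le> s \<Longrightarrow> g'' s \<le> L' + 0 * (s - a)"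
    using g''_le by (auto simp: L'_def intro: le_max_iff_disj[THEN iffD2])
  have "g' s \<le> g' a + L' * (s - a)" if "a \<le> s" for s
    using MVT_affine_upper_bound[OF g' L'(2) order_refl that] by (simp add: mult.commute)
  then have g_le: "g s \<le> g a + (s - a) * (g' a + L' * (s - a))" if "a \<le> s" for s
    using MVT_affine_upper_bound[OF g _ L'(1) that] by blast
  define K where "K = \<bar>g a\<bar> + 2 * \<bar>g' a\<bar> + 4 * L' + 1"
  have "g s \<le> K * s\<^sup>2" if "max \<bar>a\<bar> 1 \<le> s" for s
  proof -
    have s: "a \<le> s" "s - a \<le> 2 * s" "1 \<le> s" "s \<le> s\<^sup>2"
      using that by (auto simp: power2_eq_square)
    then have "1 \<le> s\<^sup>2"
      by linarith
    have "(s - a) * (g' a + L' * (s - a)) \<le> (s - a) * (\<bar>g' a\<bar> + L' * (s - a))"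
      using s by (intro mult_left_mono) auto
    also have "\<dots> \<le> (2 * s) * (\<bar>g' a\<bar> + L' * (2 * s))"
      using s L'(1) by (intro mult_mono add_left_mono mult_left_mono) auto
    also have "\<dots> \<le> 2 * \<bar>g' a\<bar> * s\<^sup>2 + 4 * L' * s\<^sup>2"
      using s(3) mult_left_mono[of 1 s "\<bar>g' a\<bar>"] by (simp add: algebra_simps power2_eq_square)
    finally have "g s \<le> \<bar>g a\<bar> + 2 * \<bar>g' a\<bar> * s\<^sup>2 + 4 * L' * s\<^sup>2"
      using g_le[OF s(1)] by linarith
    also have "\<dots> \<le> K * s\<^sup>2"
      using \<open>1 \<le> s\<^sup>2\<close> mult_left_mono[of 1 "s\<^sup>2" "\<bar>g a\<bar>"] by (simp add: K_def algebra_simps)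
    finally show ?thesis .
  qed
  moreover have "K > 0"
    using L'(1) by (simp add: K_def add_nonneg_pos)
  ultimately show ?thesis
    using eventually_ge_at_top[of "max \<bar>a\<bar> 1"] by (auto elim!: eventually_mono)
qed

lemma entire_order_nonpos_if_log_max_modulus_le:
  assumes M_gt_1: "\<forall>\<^sub>F r in at_top. 1 < max_modulus f r"
    and log_M_le: "\<forall>\<^sub>F r in at_top. ln (max_modulus f r) \<le> K * (ln r)\<^sup>2"
    and K: "K > 0"
  shows "entire_order f \<le> 0"
proof -
  have "\<forall>\<^sub>F r in at_top. ereal (ln (ln (max_modulus f r)) / ln r) \<le> ereal ((ln K + 2 * ln (ln r)) / ln r)"
    using M_gt_1 log_M_le eventually_gt_at_top[of 1]
  proof eventually_elim
    case (elim r)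
    then have "0 < ln r" "0 < ln (max_modulus f r)"
      by auto
    then have "ln (ln (max_modulus f r)) \<le> ln (K * (ln r)\<^sup>2)"
      using elim K by (subst ln_le_cancel_iff) auto
    also have "\<dots> = ln K + 2 * ln (ln r)"
      using K \<open>0 < ln r\<close> by (simp add: ln_mult ln_realpow)
    finally show ?case
      using \<open>0 < ln r\<close> by (simp add: divide_right_mono)
  qed
  then have "entire_order f \<le> Limsup at_top (\<lambda>r. ereal ((ln K + 2 * ln (ln r)) / ln r))"
    unfolding entire_order_def by (rule Limsup_mono)
  also have "\<dots> = 0"
  proof -
    have "((\<lambda>r. (ln K + 2 * ln (ln r)) / ln r) \<longlongrightarrow> 0) at_top"
      by real_asymp
    then show ?thesis
      using lim_imp_Limsup[OF trivial_limit_at_top_linorder tendsto_ereal] by (simp add: zero_ereal_def)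
  qed
  finally show ?thesis .
qed

definition logistic :: "real \<Rightarrow> real \<Rightarrow> real" where
  "logistic b s = exp s / (b + exp s)"

lemma logistic_bounds:
  assumes "b > 0"
  shows "0 < logistic b s" "logistic b s < 1" "logistic b s \<le> exp s / b"
  using assms by (auto simp: logistic_def field_simps add_pos_pos)

lemma has_real_derivative_logistic:
  assumes "b > 0"
  shows "(logistic b has_real_derivative logistic b s * (1 - logistic b s)) (at s)"
proof -
  have pos: "b + exp s > 0"
    using assms by (simp add: add_pos_pos)
  have "(logistic b has_real_derivative (exp s * (b + exp s) - exp s * exp s) / (b + exp s)^2) (at s)"
    unfolding logistic_def using pos by (auto intro!: derivative_eq_intros simp: power2_eq_square)
  also have "(exp s * (b + exp s) - exp s * exp s) / (b + exp s)^2 = logistic b s * (1 - logistic b s)"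
    using pos by (simp add: logistic_def field_simps power2_eq_square)
  finally show ?thesis .
qed

text \<open>Since the logistic function \<open>\<sigma>\<close> satisfies \<open>\<sigma>' = \<sigma> (1 - \<sigma>)\<close>, its \<open>m\<close>-th derivative is
  \<open>P\<^sub>m(\<sigma>)\<close> for the polynomials below.\<close>

fun logistic_deriv_poly :: "nat \<Rightarrow> real poly" where
  "logistic_deriv_poly 0 = [:0, 1:]"
| "logistic_deriv_poly (Suc m) = pderiv (logistic_deriv_poly m) * [:0, 1, -1:]"

lemma logistic_deriv_poly_Suc_bound:
  "\<exists>C\<ge>0. \<forall>y\<in>{0..1}. \<bar>poly (logistic_deriv_poly (Suc m)) y\<bar> \<le> C * (y * (1 - y))"
proof -
  obtain C where C: "\<forall>y\<in>{0..1::real}. norm (poly (pderiv (logistic_deriv_poly m)) y) \<le> C"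
    using compact_imp_bounded[OF compact_continuous_image[of "{0..1}"]] bounded_iff
    by (metis continuous_on_poly continuous_on_id compact_Icc image_eqI)
  have "\<bar>poly (logistic_deriv_poly (Suc m)) y\<bar> \<le> max C 0 * (y * (1 - y))" if "y \<in> {0..1}" for y
  proof -
    have "poly (logistic_deriv_poly (Suc m)) y = poly (pderiv (logistic_deriv_poly m)) y * (y * (1 - y))"
      by (simp add: algebra_simps)
    moreover have "0 \<le> y * (1 - y)"
      using that by simp
    ultimately have "\<bar>poly (logistic_deriv_poly (Suc m)) y\<bar> = \<bar>poly (pderiv (logistic_deriv_poly m)) y\<bar> * (y * (1 - y))"
      by (metis abs_mult abs_of_nonneg)
    also have "\<dots> \<le> max C 0 * (y * (1 - y))"
      using C that by (intro mult_right_mono) force+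
    finally show ?thesis .
  qed
  then show ?thesis
    by (intro exI[of _ "max C 0"]) auto
qed

fun log_factor_deriv :: "real \<Rightarrow> nat \<Rightarrow> real \<Rightarrow> real" where
  "log_factor_deriv b 0 s = ln (1 + exp s / b)"
| "log_factor_deriv b (Suc m) s = poly (logistic_deriv_poly m) (logistic b s)"

lemma has_real_derivative_log_factor_deriv:
  assumes "b > 0"
  shows "(log_factor_deriv b n has_real_derivative log_factor_deriv b (Suc n) s) (at s)"
proof (cases n)
  case 0
  have "log_factor_deriv b 0 = (\<lambda>s. ln (1 + exp s / b))"
    by auto
  moreover have "1 + exp s / b > 0"
    using assms by (simp add: add_pos_pos)
  then have "((\<lambda>s. ln (1 + exp s / b)) has_real_derivative (exp s / b) / (1 + exp s / b)) (at s)"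
    using assms by (auto intro!: derivative_eq_intros simp: field_simps)
  moreover have "(exp s / b) / (1 + exp s / b) = logistic b s"
    using assms by (simp add: logistic_def field_simps)
  ultimately show ?thesis
    using 0 by simp
next
  case (Suc m)
  have "((\<lambda>s. poly (logistic_deriv_poly m) (logistic b s)) has_real_derivative
          poly (pderiv (logistic_deriv_poly m)) (logistic b s) * (logistic b s * (1 - logistic b s))) (at s)"
    by (rule DERIV_chain2[OF poly_DERIV has_real_derivative_logistic[OF assms]])
  moreover have "log_factor_deriv b (Suc m) = (\<lambda>s. poly (logistic_deriv_poly m) (logistic b s))"
    by auto
  moreover have "poly (pderiv (logistic_deriv_poly m)) (logistic b s) * (logistic b s * (1 - logistic b s))
      = log_factor_deriv b (Suc n) s"
    using Suc by (simp add: algebra_simps)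
  ultimately show ?thesis
    using Suc by metis
qed

lemma log_factor_deriv_2: "log_factor_deriv b 2 s = logistic b s * (1 - logistic b s)"
  by (simp add: numeral_2_eq_2 pderiv_pCons algebra_simps)

lemma abs_log_factor_deriv_le_second:
  assumes "k \<ge> 2"
  shows "\<exists>C\<ge>0. \<forall>b>0. \<forall>s. \<bar>log_factor_deriv b k s\<bar> \<le> C * log_factor_deriv b 2 s"
proof -
  obtain m where k: "k = Suc (Suc m)"
    using assms by (metis add_2_eq_Suc le_Suc_ex)
  obtain C where "C \<ge> 0" "\<forall>y\<in>{0..1}. \<bar>poly (logistic_deriv_poly (Suc m)) y\<bar> \<le> C * (y * (1 - y))"
    using logistic_deriv_poly_Suc_bound by blast
  then show ?thesis
    using logistic_bounds by (intro exI[of _ C]) (auto simp: k log_factor_deriv_2 less_imp_le)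
qed

lemma abs_log_factor_deriv_le_exp: "\<exists>C\<ge>0. \<forall>b>0. \<forall>s. \<bar>log_factor_deriv b n s\<bar> \<le> C * (exp s / b)"
proof -
  consider "n = 0" | "n = 1" | "n \<ge> 2"
    by linarith
  then show ?thesis
  proof cases
    case 1
    have "\<bar>ln (1 + exp s / b)\<bar> \<le> exp s / b" if "b > 0" for b s :: real
      using that ln_add_one_self_le_self[of "exp s / b"] by simp
    then show ?thesis
      using 1 by (intro exI[of _ 1]) auto
  next
    case 2
    then show ?thesis
      using logistic_bounds by (intro exI[of _ 1]) (auto simp: less_imp_le)
  next
    case 3
    then obtain C where C: "C \<ge> 0" "\<forall>b>0. \<forall>s. \<bar>log_factor_deriv b n s\<bar> \<le> C * log_factor_deriv b 2 s"
      using abs_log_factor_deriv_le_second by blast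
    have "log_factor_deriv b 2 s \<le> exp s / b" if "b > 0" for b s
    proof -
      have "logistic b s * (1 - logistic b s) \<le> logistic b s"
        using logistic_bounds[OF that, of s] by (intro mult_left_le) auto
      then show ?thesis
        using logistic_bounds[OF that, of s] unfolding log_factor_deriv_2 by linarith
    qed
    then show ?thesis
      using C by (intro exI[of _ C]) (meson mult_left_mono order_trans)
  qed
qed

definition log_series :: "(nat \<Rightarrow> real) \<Rightarrow> nat \<Rightarrow> real \<Rightarrow> real" where
  "log_series b n s = (\<Sum>j. log_factor_deriv (b j) n s)"

context
  fixes b :: "nat \<Rightarrow> real"
  assumes b_pos: "\<And>j. b j > 0"
    and b_summable: "summable (\<lambda>j. 1 / b j)"
begin

lemma summable_abs_log_factor_deriv: "summable (\<lambda>j. \<bar>log_factor_deriv (b j) n s\<bar>)"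
proof -
  obtain C where "\<forall>b'>0. \<forall>s. \<bar>log_factor_deriv b' n s\<bar> \<le> C * (exp s / b')"
    using abs_log_factor_deriv_le_exp by blast
  then have "norm \<bar>log_factor_deriv (b j) n s\<bar> \<le> C * exp s * (1 / b j)" for j
    using b_pos[of j] by simp
  then show ?thesis
    by (rule summable_comparison_test'[OF summable_mult[OF b_summable]])
qed

lemma has_real_derivative_log_series:
  "(log_series b n has_real_derivative log_series b (Suc n) s) (at s)"
proof -
  obtain C where C: "C \<ge> 0" "\<forall>b'>0. \<forall>x. \<bar>log_factor_deriv b' (Suc n) x\<bar> \<le> C * (exp x / b')"
    using abs_log_factor_deriv_le_exp by blast
  have unif: "uniformly_convergent_on {..<s + 1} (\<lambda>N x. \<Sum>j<N. log_factor_deriv (b j) (Suc n) x)"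
  proof (rule Weierstrass_m_test'[where M = "\<lambda>j. C * exp (s + 1) * (1 / b j)"])
    fix j x
    assume "x \<in> {..<s + 1}"
    have "norm (log_factor_deriv (b j) (Suc n) x) \<le> C * (exp x / b j)"
      using C(2) b_pos[of j] by simp
    also have "\<dots> \<le> C * exp (s + 1) * (1 / b j)"
      using \<open>x \<in> {..<s + 1}\<close> C(1) b_pos[of j] by (simp add: divide_right_mono mult_left_mono)
    finally show "norm (log_factor_deriv (b j) (Suc n) x) \<le> C * exp (s + 1) * (1 / b j)" .
  qed (rule summable_mult[OF b_summable])
  have "((\<lambda>x. \<Sum>j. log_factor_deriv (b j) n x) has_real_derivative
      (\<Sum>j. log_factor_deriv (b j) (Suc n) s)) (at s)"
  proof (rule has_field_derivative_series'(2)[where S = "{..<s + 1}", OF _ _ unif])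
    show "(log_factor_deriv (b j) n has_real_derivative log_factor_deriv (b j) (Suc n) x)
        (at x within {..<s + 1})" for j x
      by (rule has_field_derivative_at_within[OF has_real_derivative_log_factor_deriv[OF b_pos]])
    show "summable (\<lambda>j. log_factor_deriv (b j) n s)"
      by (rule summable_rabs_cancel[OF summable_abs_log_factor_deriv])
  qed (auto simp: convex_real_interval interior_open)
  then show ?thesis
    by (simp add: log_series_def[abs_def])
qed

lemma higher_deriv_log_series: "(deriv ^^ n) (log_series b 0) = log_series b n"
  by (induction n) (auto intro!: ext DERIV_imp_deriv has_real_derivative_log_series)

lemma abs_log_series_le_second:
  assumes "k \<ge> 2"
  shows "\<exists>C\<ge>0. \<forall>s. \<bar>log_series b k s\<bar> \<le> C * log_series b 2 s"
proof -
  obtain C where C: "C \<ge> 0" "\<forall>b'>0. \<forall>s. \<bar>log_factor_deriv b' k s\<bar> \<le> C * log_factor_deriv b' 2 s"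
    using abs_log_factor_deriv_le_second[OF assms] by blast
  have "\<bar>log_series b k s\<bar> \<le> C * log_series b 2 s" for s
  proof -
    note summable = summable_abs_log_factor_deriv summable_rabs_cancel[OF summable_abs_log_factor_deriv]
    have "\<bar>log_series b k s\<bar> \<le> (\<Sum>j. \<bar>log_factor_deriv (b j) k s\<bar>)"
      unfolding log_series_def by (rule summable_rabs[OF summable(1)])
    also have "\<dots> \<le> (\<Sum>j. C * log_factor_deriv (b j) 2 s)"
      using C(2) b_pos by (intro suminf_le summable summable_mult) auto
    also have "\<dots> = C * log_series b 2 s"
      unfolding log_series_def by (rule suminf_mult[OF summable(2)])
    finally show ?thesis .
  qed
  then show ?thesis
    using C(1) by blast
qed


lemma LIMSEQ_prod_one_plus_div:
  "(\<lambda>n. \<Prod>j\<le>n. 1 + z / complex_of_real (b j)) \<longlonglongrightarrow> (\<Prod>j. 1 + z / complex_of_real (b j))"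
proof -
  have "norm (1 + z / complex_of_real (b j) - 1) = norm z * (1 / b j)" for j
    using b_pos[of j] by (simp add: norm_divide)
  then have "summable (\<lambda>j. norm (1 + z / complex_of_real (b j) - 1))"
    using summable_mult[OF b_summable] by simp
  then show ?thesis
    by (intro convergent_prod_LIMSEQ abs_convergent_prod_imp_convergent_prod)
      (simp add: abs_convergent_prod_conv_summable)
qed

lemma norm_prod_one_plus_div_le:
  "norm (\<Prod>j. 1 + z / complex_of_real (b j)) \<le> exp (\<Sum>j. ln (1 + norm z / b j))"
proof -
  have ln_bounds: "0 \<le> ln (1 + norm z / b j)" "ln (1 + norm z / b j) \<le> norm z * (1 / b j)" for j
    using b_pos[of j] ln_add_one_self_le_self[of "norm z / b j"] by simp_all
  then have summable: "summable (\<lambda>j. ln (1 + norm z / b j))"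
    by (intro summable_comparison_test'[OF summable_mult[OF b_summable]]) auto
  have "norm (\<Prod>j\<le>n. 1 + z / complex_of_real (b j)) \<le> exp (\<Sum>j. ln (1 + norm z / b j))" for n
  proof -
    have "norm (\<Prod>j\<le>n. 1 + z / complex_of_real (b j)) \<le> (\<Prod>j\<le>n. norm (1 + z / complex_of_real (b j)))"
      by (rule norm_prod_le)
    also have "\<dots> \<le> (\<Prod>j\<le>n. 1 + norm z / b j)"
    proof (intro prod_mono conjI)
      fix j
      show "norm (1 + z / complex_of_real (b j)) \<le> 1 + norm z / b j"
        using norm_triangle_ineq[of 1 "z / complex_of_real (b j)"] b_pos[of j] by (simp add: norm_divide)
    qed (rule norm_ge_zero)
    also have "\<dots> = exp (\<Sum>j\<le>n. ln (1 + norm z / b j))"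
    proof -
      have "0 < 1 + norm z / b j" for j
        using b_pos[of j] by (simp add: add_pos_nonneg)
      then show ?thesis
        by (simp add: exp_sum)
    qed
    also have "\<dots> \<le> exp (\<Sum>j. ln (1 + norm z / b j))"
      using sum_le_suminf[OF summable] ln_bounds(1) by simp
    finally show ?thesis .
  qed
  then show ?thesis
    by (intro tendsto_le[OF _ tendsto_const tendsto_norm[OF LIMSEQ_prod_one_plus_div]]) auto
qed

lemma norm_prod_one_plus_div_ge:
  assumes "0 \<le> r"
  shows "1 + r / b 0 \<le> norm (\<Prod>j. 1 + complex_of_real r / complex_of_real (b j))"
proof -
  have factor_ge_1: "1 \<le> 1 + r / b j" for j
    using assms b_pos[of j] by simp
  have "1 + r / b 0 \<le> norm (\<Prod>j\<le>n. 1 + complex_of_real r / complex_of_real (b j))" for n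
  proof -
    have "1 \<le> (\<Prod>j\<in>{..n} - {0}. 1 + r / b j)"
      using factor_ge_1 by (intro prod_ge_1)
    then have "1 + r / b 0 \<le> (1 + r / b 0) * (\<Prod>j\<in>{..n} - {0}. 1 + r / b j)"
      using factor_ge_1[of 0] mult_left_mono[of 1 _ "1 + r / b 0"] by simp
    also have "\<dots> = (\<Prod>j\<le>n. 1 + r / b j)"
      by (simp add: prod.remove[of "{..n}" 0])
    also have "\<dots> = norm (\<Prod>j\<le>n. 1 + complex_of_real r / complex_of_real (b j))"
    proof -
      have "0 \<le> (\<Prod>j\<le>n. 1 + r / b j)"
        using factor_ge_1 by (intro prod_nonneg) (auto intro: order_trans[OF zero_le_one])
      moreover have "(\<Prod>j\<le>n. 1 + complex_of_real r / complex_of_real (b j))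
          = complex_of_real (\<Prod>j\<le>n. 1 + r / b j)"
        by simp
      ultimately show ?thesis
        by (simp only: norm_of_real abs_of_nonneg)
    qed
    finally show ?thesis .
  qed
  then show ?thesis
    by (intro tendsto_le[OF _ tendsto_norm[OF LIMSEQ_prod_one_plus_div] tendsto_const]) auto
qed

lemma max_modulus_bounds:
  assumes f: "\<And>z. f z = (\<Prod>j. 1 + z / complex_of_real (b j))" and r: "0 < r"
  shows "max_modulus f r \<le> exp (log_series b 0 (ln r))" "1 < max_modulus f r"
proof -
  have upper: "norm (f z) \<le> exp (log_series b 0 (ln r))" if "z \<in> sphere 0 r" for z
    using norm_prod_one_plus_div_le[of z] that r by (simp add: f log_series_def)
  then show "max_modulus f r \<le> exp (log_series b 0 (ln r))"
    unfolding max_modulus_def using r by (intro cSUP_least) auto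
  have "bdd_above ((\<lambda>z. norm (f z)) ` sphere 0 r)"
    by (rule bdd_aboveI2[OF upper])
  then have "norm (f (complex_of_real r)) \<le> max_modulus f r"
    unfolding max_modulus_def using r by (intro cSUP_upper) auto
  moreover have "1 + r / b 0 \<le> norm (f (complex_of_real r))"
    using norm_prod_one_plus_div_ge r by (simp add: f)
  moreover have "0 < r / b 0"
    using r b_pos[of 0] by simp
  ultimately show "1 < max_modulus f r"
    by linarith
qed

lemma frequently_log_series_2_ge:
  assumes f: "\<And>z. f z = (\<Prod>j. 1 + z / complex_of_real (b j))" and order_pos: "0 < entire_order f"
  shows "\<exists>\<^sub>F s in at_top. L \<le> log_series b 2 s"
proof (rule ccontr)
  assume "\<not> ?thesis"
  then have "\<forall>\<^sub>F s in at_top. log_series b 2 s \<le> L"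
    by (auto simp: not_frequently not_le elim: eventually_mono)
  then obtain a where "\<And>s. a \<le> s \<Longrightarrow> log_series b 2 s \<le> L"
    by (auto simp: eventually_at_top_linorder)
  moreover have "(log_series b 0 has_real_derivative log_series b 1 s) (at s)"
    "(log_series b 1 has_real_derivative log_series b 2 s) (at s)" for s
    using has_real_derivative_log_series[of 0 s] has_real_derivative_log_series[of 1 s]
    by (simp_all add: eval_nat_numeral)
  ultimately obtain K where K: "0 < K" "\<forall>\<^sub>F s in at_top. log_series b 0 s \<le> K * s\<^sup>2"
    using quadratic_bound_if_second_deriv_le[of "log_series b 0" "log_series b 1" "log_series b 2" a L]
    by blast
  have M_gt_1: "\<forall>\<^sub>F r in at_top. 1 < max_modulus f r"
    using eventually_gt_at_top[of 0] by eventually_elim (rule max_modulus_bounds(2)[OF f])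
  have "\<forall>\<^sub>F r in at_top. ln (max_modulus f r) \<le> K * (ln r)\<^sup>2"
    using eventually_compose_filterlim[OF K(2) ln_at_top] eventually_gt_at_top[of 0]
  proof eventually_elim
    case (elim r)
    then have "ln (max_modulus f r) \<le> ln (exp (log_series b 0 (ln r)))"
      using max_modulus_bounds[OF f, of r] by (subst ln_le_cancel_iff) auto
    with elim show ?case
      by simp
  qed
  then have "entire_order f \<le> 0"
    using M_gt_1 K(1) entire_order_nonpos_if_log_max_modulus_le by blast
  with order_pos show False
    by simp
qed

end

theorem proposition4p7:
  fixes b :: "nat \<Rightarrow> real" and \<rho> :: real
    and f :: "complex \<Rightarrow> complex" and F :: "real \<Rightarrow> real"
  assumes b_pos: "\<And>j. b j > 0"
    and b_mono: "mono b"
    and b_summable: "summable (\<lambda>j. 1 / b j)"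
    and f_def: "\<And>z. f z = (\<Prod>j. 1 + z / complex_of_real (b j))"
    and order: "entire_order f = ereal \<rho>"
    and rho: "0 < \<rho>" "\<rho> < 1"
    and F_def: "\<And>s. F s = (\<Sum>j. ln (1 + exp s / b j))"
  shows "\<And>k::nat. k \<ge> 3 \<Longrightarrow>
    Liminf at_top (\<lambda>s. ereal (\<bar>(deriv ^^ k) F s\<bar> / ((deriv ^^ 2) F s) powr (real k / 2))) = 0"
proof -
  fix k :: nat
  assume "k \<ge> 3"
  have F: "F = log_series b 0"
    by (simp add: fun_eq_iff F_def log_series_def)
  obtain C where "\<And>s. \<bar>log_series b k s\<bar> \<le> C * log_series b 2 s"
    using abs_log_series_le_second[OF b_pos b_summable, of k] \<open>k \<ge> 3\<close> by auto
  moreover have "\<exists>\<^sub>F s in at_top. L \<le> log_series b 2 s" for L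
    using frequently_log_series_2_ge[OF b_pos b_summable f_def] order rho by simp
  ultimately show "Liminf at_top (\<lambda>s. ereal (\<bar>(deriv ^^ k) F s\<bar> / ((deriv ^^ 2) F s) powr (real k / 2))) = 0"
    unfolding F higher_deriv_log_series[OF b_pos b_summable]
    using \<open>k \<ge> 3\<close> by (intro Liminf_abs_div_powr_eq_0) auto
qed

end
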